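(* Assume the model (M.2) and the sub-Gaussian condition (A.4) described in the context, and let Algorithm 2 be applied to $X_1,\ldots,X_N$. For $k\in\{1,\ldots,M_0+1\}$ let $E_{k,N}$ be the event that there exist integers $0\le n_1<n_2<n_3\le N_k$ such that $\{X^{(k)}_n:n=n_1+1,\ldots,n_2\}$ and $\{X^{(k)}_n:n=n_2+1,\ldots,n_3\}$ are two (consecutive) detected segments. Assume $f(N)\ge C\log N$, where $C>16D/c_0$ is a constant. Then $\Pr(\limsup_{N\to\infty}E_{k,N})=0$.
   Context: Model (M.2): for each sample size $N$ one observes independent random vectors $X_1,\ldots,X_N\in\mathbb{R}^D$ ($D\in\mathbb{N}$ fixed). There are $M_0\ge 0$ (fixed) change points $0=L_0<L_1<\cdots<L_{M_0}<L_{M_0+1}=N$ (depending on $N$), with segment sizes $N_k=L_k-L_{k-1}$, $N_k\to\infty$; for each $k$, $X_{L_{k-1}+1},\ldots,X_{L_k}$ are i.i.d. with distribution $\mathcal{G}_k$ with mean $\mu_k$ and finite covariance; $\mu_k\neq\mu_{k+1}$. Write $X^{(k)}_n=X_{L_{k-1}+n}$, $n=1,\ldots,N_k$. (A.4): there is $c_0>0$ such that for every $k$, coordinate $d$, $n\ge1$ and $a>0$, the mean $\bar Z$ of $n$ i.i.d. copies of the $d$-th marginal of $\mathcal{G}_k$ satisfies $\Pr(|\bar Z-E\bar Z|\ge a)\le2e^{-c_0a^2n}$. Quadratic loss: $\mathrm{Loss}_q(x_a,\ldots,x_b)=\sum_{n=a}^b|x_n-\bar x|^2$, $\bar x$ the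 sample mean. Algorithm 2 (inputs $M_{\max}\ge1$, penalty $f(N)>0$, minimal segment size $\beta(N)$): for $k=0,1,\ldots,M_{\max}$ compute $\hat e_k=\min\sum_{j=1}^{k+1}\mathrm{Loss}_q(x_{\ell_{j-1}+1},\ldots,x_{\ell_j})$ over $0=\ell_0<\ell_1<\cdots<\ell_{k+1}=N$ with a minimizer; if its smallest segment has size $<\beta(N)$, set $M=k-1$ and stop (else $M=M_{\max}$). Output $\hat M=\arg\min_{0\le k\le M}(\hat e_k+kf(N))$ and the change points $\hat\ell_1<\cdots<\hat\ell_{\hat M}$ of the minimizer for $k=\hat M$. The detected segments are the blocks $\{X_n:n=\hat\ell_{j-1}+1,\ldots,\hat\ell_j\}$, $j=1,\ldots,\hat M+1$ ($\hat\ell_0=0,\hat\ell_{\hat M+1}=N$); two detected segments are consecutive if they are neighbors. $\limsup_N E_N$ is the event that $E_N$ occurs for infinitely many $N$. *)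

theory Defs
  imports "HOL-Probability.Probability"
begin

text \<open>Data of sample size N: a function x with x n the n-th observation, n = 1..N.
  Change-point candidates: a list ls = [l_1,...,l_k]; boundaries 0 # ls @ [N].\<close>

definition seg_mean :: "(nat \<Rightarrow> real^'d) \<Rightarrow> nat \<Rightarrow> nat \<Rightarrow> real^'d" where
  "seg_mean x a b = (1 / real (b - a)) *\<^sub>R (\<Sum>n\<in>{a<..b}. x n)"

definition seg_loss :: "(nat \<Rightarrow> real^'d) \<Rightarrow> nat \<Rightarrow> nat \<Rightarrow> real" where
  "seg_loss x a b = (\<Sum>n\<in>{a<..b}. (norm (x n - seg_mean x a b))^2)"

definition bounds :: "nat \<Rightarrow> nat list \<Rightarrow> nat list" where
  "bounds N ls = 0 # ls @ [N]"

definition admissible :: "nat \<Rightarrow> nat \<Rightarrow> nat list \<Rightarrow> bool" where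
  "admissible N k ls \<longleftrightarrow> length ls = k \<and> sorted_wrt (<) (bounds N ls)"

definition part_cost :: "(nat \<Rightarrow> real^'d) \<Rightarrow> nat \<Rightarrow> nat list \<Rightarrow> real" where
  "part_cost x N ls = (\<Sum>j<length ls + 1. seg_loss x (bounds N ls ! j) (bounds N ls ! Suc j))"

definition opt_part :: "(nat \<Rightarrow> real^'d) \<Rightarrow> nat \<Rightarrow> nat \<Rightarrow> nat list" where
  "opt_part x N k = arg_min (part_cost x N) (admissible N k)"

definition e_hat :: "(nat \<Rightarrow> real^'d) \<Rightarrow> nat \<Rightarrow> nat \<Rightarrow> real" where
  "e_hat x N k = part_cost x N (opt_part x N k)"

definition min_seg :: "nat \<Rightarrow> nat list \<Rightarrow> nat" where
  "min_seg N ls = Min {bounds N ls ! Suc j - bounds N ls ! j | j. j < length ls + 1}"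

text \<open>Stopping index M of Algorithm 2 (loop k = 0,1,...,Mmax).\<close>
definition alg2_M :: "(nat \<Rightarrow> real^'d) \<Rightarrow> nat \<Rightarrow> nat \<Rightarrow> nat \<Rightarrow> nat" where
  "alg2_M x N Mmax beta =
     (if \<exists>k\<le>Mmax. min_seg N (opt_part x N k) < beta
      then (LEAST k. k \<le> Mmax \<and> min_seg N (opt_part x N k) < beta) - 1
      else Mmax)"

definition alg2_Mhat :: "(nat \<Rightarrow> real^'d) \<Rightarrow> nat \<Rightarrow> nat \<Rightarrow> real \<Rightarrow> nat \<Rightarrow> nat" where
  "alg2_Mhat x N Mmax fN beta =
     arg_min (\<lambda>k. e_hat x N k + real k * fN) (\<lambda>k. k \<le> alg2_M x N Mmax beta)"

definition alg2_cps :: "(nat \<Rightarrow> real^'d) \<Rightarrow> nat \<Rightarrow> nat \<Rightarrow> real \<Rightarrow> nat \<Rightarrow> nat list" where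
  "alg2_cps x N Mmax fN beta = opt_part x N (alg2_Mhat x N Mmax fN beta)"

definition detected_segments ::
  "(nat \<Rightarrow> real^'d) \<Rightarrow> nat \<Rightarrow> nat \<Rightarrow> real \<Rightarrow> nat \<Rightarrow> nat set set" where
  "detected_segments x N Mmax fN beta =
     (let ls = alg2_cps x N Mmax fN beta; bd = bounds N ls
      in {{bd ! j + 1 .. bd ! Suc j} | j. j < length ls + 1})"

end

theory Submission
  imports Defs
begin

text \<open>If two consecutive detected segments lie inside the true segment k, deleting the
  change point between them lowers the number of change points by one while the loss grows by
  at most the deviation terms of the two block means from the true mean. Optimality of the
  penalised criterion therefore forces one of the two blocks to have a coordinate mean off by at
  least sqrt (f N / (2 D m)), m its length. By (A.4) such a block has probability at most
  2 exp (-c0 f N / (2 D)) \<le> 2 N^-4 as C > 16 D / c0; a union over the at most N^2 D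
  choices of block and coordinate gives 2 D N^-2, which is summable, and Borel--Cantelli
  concludes.\<close>

lemma arg_min_finite:
  fixes f :: "'b \<Rightarrow> 'a::linorder"
  assumes "finite {x. P x}" "P w"
  shows "P (arg_min f P)" "P y \<Longrightarrow> f (arg_min f P) \<le> f y"
proof -
  have eq: "arg_min f P = arg_min_on f {x. P x}" by (simp add: arg_min_on_def)
  show "P (arg_min f P)" using arg_min_if_finite(1)[OF assms(1)] assms(2) unfolding eq by blast
  show "P y \<Longrightarrow> f (arg_min f P) \<le> f y" using arg_min_least[OF assms(1)] unfolding eq by blast
qed

lemma finite_admissible: "finite {ls. admissible N k ls}"
proof (rule finite_subset[OF _ finite_lists_length_eq[of "{..<N}" k]])
  show "{ls. admissible N k ls} \<subseteq> {xs. set xs \<subseteq> {..<N} \<and> length xs = k}"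
    by (auto simp: admissible_def bounds_def sorted_wrt_append)
qed auto

lemma admissible_upt: "k < N \<Longrightarrow> admissible N k [1..<k+1]"
  by (auto simp: admissible_def bounds_def sorted_wrt_append)

lemma admissible_opt_part: "k < N \<Longrightarrow> admissible N k (opt_part x N k)"
  unfolding opt_part_def by (rule arg_min_finite(1)[OF finite_admissible admissible_upt])

lemma e_hat_le_part_cost: "admissible N k ls \<Longrightarrow> e_hat x N k \<le> part_cost x N ls"
  unfolding e_hat_def opt_part_def by (rule arg_min_finite(2)[OF finite_admissible])

lemma alg2_M_le: "alg2_M x N Mmax beta \<le> Mmax"
proof (cases "\<exists>k\<le>Mmax. min_seg N (opt_part x N k) < beta")
  case True
  then have "(LEAST k. k \<le> Mmax \<and> min_seg N (opt_part x N k) < beta) \<le> Mmax"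
    by (metis (mono_tags, lifting) LeastI_ex)
  then show ?thesis using True by (simp add: alg2_M_def)
qed (auto simp: alg2_M_def)

lemma alg2_Mhat_le: "alg2_Mhat x N Mmax fN beta \<le> alg2_M x N Mmax beta"
  unfolding alg2_Mhat_def by (rule arg_min_finite(1)[where w = 0]) auto

lemma alg2_Mhat_minimal:
  "k \<le> alg2_M x N Mmax beta \<Longrightarrow>
   e_hat x N (alg2_Mhat x N Mmax fN beta) + real (alg2_Mhat x N Mmax fN beta) * fN
     \<le> e_hat x N k + real k * fN"
  unfolding alg2_Mhat_def by (rule arg_min_finite(2)[where w = 0]) auto

fun chain_cost :: "(nat \<Rightarrow> nat \<Rightarrow> real) \<Rightarrow> nat list \<Rightarrow> real" where
  "chain_cost g (u # v # r) = g u v + chain_cost g (v # r)"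
| "chain_cost g _ = 0"

lemma sum_consecutive_eq_chain_cost:
  "(\<Sum>i<length l - 1. g (l ! i) (l ! Suc i)) = chain_cost g l"
proof (induction g l rule: chain_cost.induct)
  case (1 g u v r)
  have "(\<Sum>i<length (u # v # r) - 1. g ((u # v # r) ! i) ((u # v # r) ! Suc i))
      = g u v + (\<Sum>i<length r. g ((v # r) ! i) ((v # r) ! Suc i))"
    by (simp add: sum.lessThan_Suc_shift del: sum.lessThan_Suc)
  then show ?case using 1 by simp
qed auto

lemma part_cost_eq_chain_cost: "part_cost x N ls = chain_cost (seg_loss x) (bounds N ls)"
  unfolding part_cost_def sum_consecutive_eq_chain_cost[symmetric] by (simp add: bounds_def)

lemma chain_cost_merge:
  "chain_cost g (xs @ [a, b, c] @ ys) = chain_cost g (xs @ [a, c] @ ys) + g a b + g b c - g a c"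
proof (induction xs)
  case (Cons y xs)
  then show ?case by (cases xs) auto
qed simp

text \<open>Deleting the change point at position j of the list, i.e. boundary j+1 of the segmentation.\<close>

lemma admissible_delete:
  assumes adm: "admissible N m ls" and j: "j < m"
  shows "admissible N (m - 1) (take j ls @ drop (Suc j) ls)"
proof -
  define bd where "bd = bounds N ls"
  have "length bd = m + 2" "sorted_wrt (<) bd"
    using adm by (auto simp: bd_def bounds_def admissible_def)
  have "bd = take (Suc j) bd @ [bd ! Suc j] @ drop (Suc (Suc j)) bd"
    using j \<open>length bd = m + 2\<close> by (simp add: Cons_nth_drop_Suc)
  then have "sorted_wrt (<) (take (Suc j) bd @ drop (Suc (Suc j)) bd)"
    using \<open>sorted_wrt (<) bd\<close>
    by (smt (verit) sorted_wrt_append append_Cons append_Nil list.set_intros(2) sorted_wrt.simps(2))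
  moreover have "take (Suc j) bd @ drop (Suc (Suc j)) bd = bounds N (take j ls @ drop (Suc j) ls)"
    using adm j by (simp add: bounds_def bd_def admissible_def)
  ultimately show ?thesis using adm j by (simp add: admissible_def)
qed

lemma part_cost_delete:
  assumes adm: "admissible N m ls" and j: "j < m"
  defines "bd \<equiv> bounds N ls"
  shows "part_cost x N ls = part_cost x N (take j ls @ drop (Suc j) ls)
           + seg_loss x (bd ! j) (bd ! Suc j) + seg_loss x (bd ! Suc j) (bd ! Suc (Suc j))
           - seg_loss x (bd ! j) (bd ! Suc (Suc j))"
proof -
  have len: "length bd = m + 2" using adm by (auto simp: bd_def bounds_def admissible_def)
  define ys where "ys = drop (Suc (Suc (Suc j))) bd"
  have split: "bd = take j bd @ [bd ! j, bd ! Suc j, bd ! Suc (Suc j)] @ ys"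
    using j len by (simp add: ys_def Cons_nth_drop_Suc)
  have "bounds N (take j ls @ drop (Suc j) ls) = take (Suc j) bd @ drop (Suc (Suc j)) bd"
    using adm j by (simp add: bounds_def bd_def admissible_def)
  also have "\<dots> = take j bd @ [bd ! j, bd ! Suc (Suc j)] @ ys"
    using j len by (simp add: ys_def take_Suc_conv_app_nth Cons_nth_drop_Suc)
  finally show ?thesis
    using chain_cost_merge[of "seg_loss x" "take j bd"] split
    by (metis part_cost_eq_chain_cost bd_def)
qed

lemma detected_segment_bounds:
  assumes "{a+1..b} \<in> detected_segments x N Mmax fN beta" "a < b"
  defines "ls \<equiv> alg2_cps x N Mmax fN beta"
  shows "\<exists>j<length ls + 1. bounds N ls ! j = a \<and> bounds N ls ! Suc j = b"
proof -
  obtain j where j: "j < length ls + 1" "{bounds N ls ! j + 1 .. bounds N ls ! Suc j} = {a+1..b}"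
    using assms(1) unfolding detected_segments_def ls_def Let_def by blast
  then show ?thesis using assms(2) by (metis Icc_eq_Icc Suc_eq_plus1 Suc_leI add_right_cancel)
qed

lemma penalty_le_merge_gain:
  assumes N: "Mmax < N"
    and "{a+1..b} \<in> detected_segments x N Mmax fN beta" "a < b"
    and "{b+1..c} \<in> detected_segments x N Mmax fN beta" "b < c"
  shows "fN \<le> seg_loss x a c - seg_loss x a b - seg_loss x b c"
proof -
  define m where "m = alg2_Mhat x N Mmax fN beta"
  define ls where "ls = opt_part x N m"
  define bd where "bd = bounds N ls"
  have mM: "m \<le> alg2_M x N Mmax beta" unfolding m_def by (rule alg2_Mhat_le)
  with alg2_M_le N have adm: "admissible N m ls" unfolding ls_def
    by (metis admissible_opt_part le_trans not_le)
  then have len: "length ls = m" "length bd = m + 2" and sorted: "sorted_wrt (<) bd"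
    by (auto simp: admissible_def bd_def bounds_def)
  have cps: "alg2_cps x N Mmax fN beta = ls" by (simp add: alg2_cps_def ls_def m_def)
  obtain j where j: "j < m + 1" "bd ! j = a" "bd ! Suc j = b"
    using detected_segment_bounds[OF assms(2,3)] len unfolding cps bd_def by auto
  obtain j' where j': "j' < m + 1" "bd ! j' = b" "bd ! Suc j' = c"
    using detected_segment_bounds[OF assms(4,5)] len unfolding cps bd_def by auto
  have "distinct bd" using sorted by (simp add: strict_sorted_iff)
  then have "j' = Suc j" using j j' len nth_eq_iff_index_eq[of bd j' "Suc j"] by simp
  then have jm: "j < m" and c: "bd ! Suc (Suc j) = c" using j' by auto
  have "e_hat x N m + real m * fN \<le> e_hat x N (m - 1) + real (m - 1) * fN"
    using alg2_Mhat_minimal[of "m - 1" x N Mmax beta fN] mM unfolding m_def by simp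
  moreover have "e_hat x N (m - 1) \<le> part_cost x N (take j ls @ drop (Suc j) ls)"
    by (rule e_hat_le_part_cost[OF admissible_delete[OF adm jm]])
  moreover have "e_hat x N m = part_cost x N ls" by (simp add: e_hat_def ls_def)
  ultimately show ?thesis
    using part_cost_delete[OF adm jm, of x] j c jm unfolding bd_def[symmetric]
    by (simp add: of_nat_diff algebra_simps)
qed

lemma sum_sq_dist_eq_seg_loss:
  fixes x :: "nat \<Rightarrow> real^'d"
  assumes "a < b"
  shows "(\<Sum>n\<in>{a<..b}. (norm (x n - \<mu>))^2)
           = seg_loss x a b + real (b - a) * (norm (seg_mean x a b - \<mu>))^2"
proof -
  define m where "m = seg_mean x a b"
  have "(\<Sum>n\<in>{a<..b}. (norm (x n - \<mu>))^2)
      = (\<Sum>n\<in>{a<..b}. (norm (x n - m))^2 + 2 * inner (x n - m) (m - \<mu>) + (norm (m - \<mu>))^2)"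
  proof (rule sum.cong[OF refl])
    fix n
    have e: "x n - \<mu> = (x n - m) + (m - \<mu>)" by simp
    show "(norm (x n - \<mu>))^2 = (norm (x n - m))^2 + 2 * inner (x n - m) (m - \<mu>) + (norm (m - \<mu>))^2"
      unfolding e power2_norm_eq_inner inner_add_left inner_add_right
      by (simp add: inner_commute[of "m - \<mu>" "x n - m"])
  qed
  also have "\<dots> = (\<Sum>n\<in>{a<..b}. (norm (x n - m))^2) + 2 * inner (\<Sum>n\<in>{a<..b}. x n - m) (m - \<mu>)
      + real (b - a) * (norm (m - \<mu>))^2"
    by (simp add: sum.distrib sum_distrib_left inner_sum_left)
  also have "(\<Sum>n\<in>{a<..b}. x n - m) = 0"
    using assms by (simp add: sum_subtractf seg_mean_def m_def sum_constant_scaleR del: sum_constant)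
  finally show ?thesis by (simp add: seg_loss_def m_def)
qed

lemma merge_gain_le:
  fixes x :: "nat \<Rightarrow> real^'d"
  assumes "a < b" "b < c"
  shows "seg_loss x a c - seg_loss x a b - seg_loss x b c
    \<le> real (b - a) * (norm (seg_mean x a b - \<mu>))^2 + real (c - b) * (norm (seg_mean x b c - \<mu>))^2"
proof -
  have "seg_loss x a c \<le> (\<Sum>n\<in>{a<..c}. (norm (x n - \<mu>))^2)"
    using sum_sq_dist_eq_seg_loss[of a c x \<mu>] assms by simp
  also have "\<dots> = (\<Sum>n\<in>{a<..b}. (norm (x n - \<mu>))^2) + (\<Sum>n\<in>{b<..c}. (norm (x n - \<mu>))^2)"
  proof -
    have "{a<..c} = {a<..b} \<union> {b<..c}" "{a<..b} \<inter> {b<..c} = {}" using assms by auto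
    then show ?thesis by (simp add: sum.union_disjoint)
  qed
  finally show ?thesis
    using sum_sq_dist_eq_seg_loss[OF assms(1), of x \<mu>] sum_sq_dist_eq_seg_loss[OF assms(2), of x \<mu>]
    by simp
qed

lemma exists_component_sq_ge:
  fixes v :: "real^'d"
  assumes "t \<le> (norm v)^2"
  shows "\<exists>d. t / real CARD('d) \<le> (v $ d)^2"
proof (rule ccontr)
  assume "\<not> ?thesis"
  then have "(\<Sum>d\<in>UNIV. (v $ d)^2) < (\<Sum>d\<in>(UNIV::'d set). t / real CARD('d))"
    by (intro sum_strict_mono) (simp_all add: not_le)
  also have "\<dots> = t" by simp
  finally show False using assms by (simp add: norm_vec_def L2_set_def sum_nonneg)
qed

lemma exists_component_dev_ge:
  fixes x :: "nat \<Rightarrow> real^'d"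
  assumes "a < b" "fN / 2 \<le> real (b - a) * (norm (seg_mean x a b - \<mu>))^2"
  shows "\<exists>d. sqrt (fN / (2 * real CARD('d) * real (b - a))) \<le> \<bar>seg_mean x a b $ d - \<mu> $ d\<bar>"
proof -
  have "fN / (2 * real (b - a)) \<le> (norm (seg_mean x a b - \<mu>))^2"
    using assms by (simp add: field_simps)
  then obtain d where "fN / (2 * real (b - a)) / real CARD('d) \<le> ((seg_mean x a b - \<mu>) $ d)^2"
    using exists_component_sq_ge by blast
  then have "fN / (2 * real CARD('d) * real (b - a)) \<le> (seg_mean x a b $ d - \<mu> $ d)^2"
    by (simp add: field_simps)
  then show ?thesis by (metis real_sqrt_abs real_sqrt_le_mono)
qed

text \<open>Merging two consecutive detected segments would save the penalty, so one of them has a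
  mean far from any fixed \<open>\<mu>\<close>, in particular from the true mean.\<close>

lemma consecutive_detected_imp_mean_dev:
  fixes x :: "nat \<Rightarrow> real^'d"
  assumes "Mmax < N"
    and "{a+1..b} \<in> detected_segments x N Mmax fN beta" "a < b"
    and "{b+1..c} \<in> detected_segments x N Mmax fN beta" "b < c"
  shows "\<exists>p q d. ((p = a \<and> q = b) \<or> (p = b \<and> q = c)) \<and> p < q \<and>
           sqrt (fN / (2 * real CARD('d) * real (q - p))) \<le> \<bar>seg_mean x p q $ d - \<mu> $ d\<bar>"
proof -
  have "fN \<le> real (b - a) * (norm (seg_mean x a b - \<mu>))^2 + real (c - b) * (norm (seg_mean x b c - \<mu>))^2"
    using penalty_le_merge_gain[OF assms] merge_gain_le[OF assms(3,5), of x \<mu>] by linarith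
  then consider "fN / 2 \<le> real (b - a) * (norm (seg_mean x a b - \<mu>))^2"
    | "fN / 2 \<le> real (c - b) * (norm (seg_mean x b c - \<mu>))^2" by linarith
  then show ?thesis
  proof cases
    case 1 then show ?thesis using exists_component_dev_ge[OF assms(3) 1] assms(3) by blast
  next
    case 2 then show ?thesis using exists_component_dev_ge[OF assms(5) 2] assms(5) by blast
  qed
qed

lemma borel_measurable_seg_mean_component:
  fixes Y :: "nat \<Rightarrow> 'a \<Rightarrow> real^'d"
  assumes "\<forall>i\<in>{a<..b}. Y i \<in> borel_measurable M"
  shows "(\<lambda>\<omega>. seg_mean (\<lambda>n. Y n \<omega>) a b $ d) \<in> borel_measurable M"
proof -
  have nth_meas: "(\<lambda>v::real^'d. v $ d) \<in> borel_measurable borel"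
    by (intro borel_measurable_continuous_onI linear_continuous_on bounded_linear_vec_nth)
  have "(\<lambda>\<omega>. Y i \<omega> $ d) \<in> borel_measurable M" if "i \<in> {a<..b}" for i
    using measurable_comp[OF bspec[OF assms that] nth_meas] by (simp add: o_def)
  then have "(\<lambda>\<omega>. (1 / real (b - a)) * (\<Sum>i\<in>{a<..b}. Y i \<omega> $ d)) \<in> borel_measurable M"
    by measurable
  then show ?thesis by (simp add: seg_mean_def sum_component)
qed

lemma distr_block_PiM:
  fixes Y :: "nat \<Rightarrow> 'a \<Rightarrow> real^'d" and G :: "(real^'d) measure"
  assumes P: "prob_space M"
    and ind: "prob_space.indep_vars M (\<lambda>_. borel) Y S" and sub: "{a<..b} \<subseteq> S"
    and rv: "\<forall>i\<in>{a<..b}. Y i \<in> borel_measurable M"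
    and dist: "\<forall>i\<in>{a<..b}. distr M borel (Y i) = G"
    and G: "prob_space G" "sets G = sets borel"
    and ab: "a < b"
  shows "distr M (PiM {..<b-a} (\<lambda>_. G)) (\<lambda>\<omega>. \<lambda>i\<in>{..<b-a}. Y (Suc (a + i)) \<omega>)
           = PiM {..<b-a} (\<lambda>_. G)"
proof -
  interpret prob_space M by (rule P)
  define K where "K = {a<..b}"
  define I where "I = {..<b-a}"
  define h where "h = (\<lambda>i. Suc (a + i))"
  have rvK: "\<And>i. i \<in> K \<Longrightarrow> random_variable borel (Y i)" using rv by (simp add: K_def)
  have "distr M (PiM K (\<lambda>_. borel)) (\<lambda>\<omega>. \<lambda>i\<in>K. Y i \<omega>) = PiM K (\<lambda>i. distr M borel (Y i))"
    using indep_vars_iff_distr_eq_PiM'[of K Y] indep_vars_subset[OF ind sub] ab rvK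
    by (auto simp: K_def)
  also have "\<dots> = PiM K (\<lambda>_. G)" by (rule PiM_cong) (use dist in \<open>auto simp: K_def\<close>)
  finally have joint: "distr M (PiM K (\<lambda>_. borel)) (\<lambda>\<omega>. \<lambda>i\<in>K. Y i \<omega>) = PiM K (\<lambda>_. G)" .
  have reindex: "distr (PiM K (\<lambda>_. G)) (PiM I (\<lambda>_. G)) (\<lambda>\<omega>. \<lambda>n\<in>I. \<omega> (h n)) = PiM I (\<lambda>_. G)"
  proof -
    have "h \<in> I \<rightarrow> K" "inj_on h I" by (auto simp: h_def I_def K_def inj_on_def)
    then show ?thesis using distr_PiM_reindex[of K "\<lambda>_. G" h I] G by simp
  qed
  have sets_eq: "sets (PiM I (\<lambda>_. G)) = sets (PiM I (\<lambda>_. borel))"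
    by (rule sets_PiM_cong) (auto simp: G)
  have reindex_meas: "(\<lambda>\<omega>. \<lambda>n\<in>I. \<omega> (h n)) \<in> measurable (PiM K (\<lambda>_. borel)) (PiM I (\<lambda>_. G))"
    unfolding measurable_cong_sets[OF refl sets_eq]
    by (intro measurable_restrict) (auto simp: h_def I_def K_def)
  have joint_meas: "(\<lambda>\<omega>. \<lambda>i\<in>K. Y i \<omega>) \<in> measurable M (PiM K (\<lambda>_. borel))"
    by (rule measurable_restrict) (use rvK in auto)
  have "distr M (PiM I (\<lambda>_. G)) ((\<lambda>\<omega>. \<lambda>n\<in>I. \<omega> (h n)) \<circ> (\<lambda>\<omega>. \<lambda>i\<in>K. Y i \<omega>)) = PiM I (\<lambda>_. G)"
    using distr_distr[OF reindex_meas joint_meas] joint reindex by simp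
  moreover have "(\<lambda>\<omega>. \<lambda>n\<in>I. \<omega> (h n)) \<circ> (\<lambda>\<omega>. \<lambda>i\<in>K. Y i \<omega>) = (\<lambda>\<omega>. \<lambda>i\<in>I. Y (h i) \<omega>)"
    by (auto simp: fun_eq_iff h_def I_def K_def)
  ultimately show ?thesis by (simp add: I_def h_def)
qed

lemma measure_seg_mean_dev_le:
  fixes Y :: "nat \<Rightarrow> 'a \<Rightarrow> real^'d" and G :: "(real^'d) measure"
  assumes P: "prob_space M"
    and ind: "prob_space.indep_vars M (\<lambda>_. borel) Y S" and sub: "{a<..b} \<subseteq> S"
    and rv: "\<forall>i\<in>{a<..b}. Y i \<in> borel_measurable M"
    and dist: "\<forall>i\<in>{a<..b}. distr M borel (Y i) = G"
    and G: "prob_space G" "sets G = sets borel"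
    and ab: "a < b"
    and tail: "measure (PiM {..<b-a} (\<lambda>_. G))
                 {z \<in> space (PiM {..<b-a} (\<lambda>_. G)).
                    \<bar>(\<Sum>i<b-a. z i $ d) / real (b-a) - \<mu>\<bar> \<ge> t} \<le> B"
  shows "measure M {\<omega> \<in> space M. t \<le> \<bar>seg_mean (\<lambda>n. Y n \<omega>) a b $ d - \<mu>\<bar>} \<le> B"
proof -
  define I where "I = {..<b-a}"
  define Q where "Q = PiM I (\<lambda>_. G)"
  define \<Phi> where "\<Phi> = (\<lambda>\<omega>. \<lambda>i\<in>I. Y (Suc (a + i)) \<omega>)"
  define T where "T = {z \<in> space Q. \<bar>(\<Sum>i<b-a. z i $ d) / real (b-a) - \<mu>\<bar> \<ge> t}"
  have sets_eq: "sets Q = sets (PiM I (\<lambda>_. borel))"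
    unfolding Q_def by (rule sets_PiM_cong) (auto simp: G)
  have \<Phi>_meas: "\<Phi> \<in> measurable M Q"
    unfolding measurable_cong_sets[OF refl sets_eq] \<Phi>_def
    by (rule measurable_restrict) (use rv in \<open>auto simp: I_def\<close>)
  have nth_meas: "(\<lambda>v::real^'d. v $ d) \<in> borel_measurable borel"
    by (intro borel_measurable_continuous_onI linear_continuous_on bounded_linear_vec_nth)
  have "(\<lambda>z :: nat \<Rightarrow> real^'d. z i $ d) \<in> borel_measurable (PiM I (\<lambda>_. borel))" if "i \<in> I" for i
    using measurable_comp[OF measurable_component_singleton[OF that, of "\<lambda>_. borel"] nth_meas] by (simp add: o_def)
  then have "(\<lambda>z. \<bar>(\<Sum>i<b-a. z i $ d) / real (b-a) - \<mu>\<bar>) \<in> borel_measurable Q"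
    unfolding measurable_cong_sets[OF sets_eq refl] I_def by measurable
  then have T_meas: "T \<in> sets Q" unfolding T_def by measurable
  have "seg_mean (\<lambda>n. Y n \<omega>) a b $ d = (\<Sum>i<b-a. \<Phi> \<omega> i $ d) / real (b-a)" for \<omega>
  proof -
    have "(\<Sum>n\<in>{a<..b}. Y n \<omega> $ d) = (\<Sum>i<b-a. Y (Suc (a + i)) \<omega> $ d)"
      by (rule sum.reindex_bij_witness[of _ "\<lambda>i. Suc (a + i)" "\<lambda>j. j - Suc a"]) auto
    then show ?thesis by (simp add: seg_mean_def sum_component \<Phi>_def I_def)
  qed
  moreover have "\<Phi> \<omega> \<in> space Q" for \<omega>
    unfolding sets_eq_imp_space_eq[OF sets_eq] by (simp add: space_PiM \<Phi>_def)
  ultimately have "{\<omega> \<in> space M. t \<le> \<bar>seg_mean (\<lambda>n. Y n \<omega>) a b $ d - \<mu>\<bar>} = \<Phi> -` T \<inter> space M"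
    unfolding T_def by auto
  then have "measure M {\<omega> \<in> space M. t \<le> \<bar>seg_mean (\<lambda>n. Y n \<omega>) a b $ d - \<mu>\<bar>}
      = measure (distr M Q \<Phi>) T"
    by (simp add: measure_distr[OF \<Phi>_meas T_meas])
  also have "distr M Q \<Phi> = Q"
    using distr_block_PiM[OF P ind sub rv dist G ab] by (simp add: Q_def \<Phi>_def I_def)
  finally show ?thesis using tail by (simp add: T_def Q_def I_def)
qed

lemma exp_neg_penalty_le:
  fixes c0 C D fN :: real
  assumes c0: "c0 > 0" and D: "D > 0" and C: "C > 16 * D / c0"
    and f: "fN \<ge> C * ln (real N)" and N: "N \<ge> 1"
  shows "exp (- (c0 * (fN / (2 * D)))) \<le> 1 / real N ^ 4"
proof -
  have lnN: "ln (real N) \<ge> 0" using N by simp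
  have "4 \<le> c0 * C / (2 * D)" using C c0 D by (simp add: field_simps)
  then have "4 * ln (real N) \<le> (c0 * C / (2 * D)) * ln (real N)"
    using lnN by (intro mult_right_mono) auto
  also have "\<dots> = (c0 / (2 * D)) * (C * ln (real N))" by simp
  also have "\<dots> \<le> (c0 / (2 * D)) * fN" using f c0 D by (intro mult_left_mono) auto
  finally have "exp (- (c0 * (fN / (2 * D)))) \<le> exp (- (4 * ln (real N)))" by simp
  also have "\<dots> = 1 / exp (ln (real N ^ 4))"
    using N by (simp add: ln_realpow exp_minus divide_inverse)
  also have "\<dots> = 1 / real N ^ 4" using N by simp
  finally show ?thesis .
qed

lemma (in finite_measure) measure_UN_le_card_mult:
  assumes "finite I" "\<And>i. i \<in> I \<Longrightarrow> A i \<in> sets M" "\<And>i. i \<in> I \<Longrightarrow> measure M (A i) \<le> p"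
  shows "measure M (\<Union>i\<in>I. A i) \<le> real (card I) * p"
proof -
  have "measure M (\<Union>i\<in>I. A i) \<le> (\<Sum>i\<in>I. measure M (A i))"
    using assms by (intro measure_UNION_le) auto
  also have "\<dots> \<le> real (card I) * p"
    using sum_bounded_above[of I "\<lambda>i. measure M (A i)" p] assms(3) by simp
  finally show ?thesis .
qed

lemma AE_not_frequently_if_summable_cover:
  assumes P: "prob_space M" and g: "summable g"
    and cover: "\<forall>\<^sub>F N in sequentially. \<exists>B\<in>sets M. measure M B \<le> g N \<and> {\<omega> \<in> space M. Q N \<omega>} \<subseteq> B"
  shows "AE \<omega> in M. \<not> (\<exists>\<^sub>F N in sequentially. Q N \<omega>)"
proof -
  interpret prob_space M by (rule P)
  obtain N0 where N0: "\<And>N. N \<ge> N0 \<Longrightarrow> \<exists>B\<in>sets M. measure M B \<le> g N \<and> {\<omega> \<in> space M. Q N \<omega>} \<subseteq> B"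
    using cover by (auto simp: eventually_sequentially)
  define B where "B N = (if N \<ge> N0 then SOME B. B \<in> sets M \<and> measure M B \<le> g N \<and> {\<omega> \<in> space M. Q N \<omega>} \<subseteq> B
                          else {})" for N
  have B: "B N \<in> sets M \<and> measure M (B N) \<le> g N \<and> {\<omega> \<in> space M. Q N \<omega>} \<subseteq> B N" if "N \<ge> N0" for N
    using someI_ex[OF N0[OF that, unfolded Bex_def]] that by (simp add: B_def)
  have B_sets: "B N \<in> sets M" for N
    using B by (cases "N \<ge> N0") (auto simp: B_def)
  have "summable (\<lambda>N. measure M (B N))"
    by (rule summable_comparison_test[OF _ g]) (use B in \<open>auto intro!: exI[of _ N0]\<close>)
  then have "AE \<omega> in M. \<forall>\<^sub>F N in sequentially. \<omega> \<in> space M - B N"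
    by (intro borel_cantelli_AE1 B_sets) (simp add: emeasure_finite less_top[symmetric])
  then show ?thesis
  proof (rule AE_mp, intro AE_I2 impI)
    fix \<omega> assume "\<forall>\<^sub>F N in sequentially. \<omega> \<in> space M - B N"
    with eventually_ge_at_top[of N0] have "\<forall>\<^sub>F N in sequentially. \<not> Q N \<omega>"
      by eventually_elim (use B in auto)
    then show "\<not> (\<exists>\<^sub>F N in sequentially. Q N \<omega>)" by (simp add: not_frequently)
  qed
qed

lemma measure_seg_mean_dev_penalty_le:
  fixes X :: "nat \<Rightarrow> 'a \<Rightarrow> real^'d" and G :: "(real^'d) measure"
  assumes P: "prob_space M"
    and indep: "prob_space.indep_vars M (\<lambda>_. borel) X S" and sub: "{a<..b} \<subseteq> S"
    and rv: "\<forall>n\<in>{a<..b}. X n \<in> borel_measurable M"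
    and distr: "\<forall>n\<in>{a<..b}. distr M borel (X n) = G"
    and G: "prob_space G" "sets G = sets borel"
    and ab: "a < b"
    and c0: "c0 > 0"
    and subgauss: "\<forall>n\<ge>1. \<forall>t>0.
               measure (PiM {..<n} (\<lambda>_. G))
                 {z \<in> space (PiM {..<n} (\<lambda>_. G)).
                    \<bar>(\<Sum>i<n. z i $ d) / real n - \<mu>\<bar> \<ge> t}
               \<le> 2 * exp (- c0 * t^2 * real n)"
    and C: "C > 16 * real CARD('d) / c0"
    and f: "fN > 0" "fN \<ge> C * ln (real N)" and N: "N \<ge> 1"
  shows "measure M {\<omega> \<in> space M. sqrt (fN / (2 * real CARD('d) * real (b - a)))
           \<le> \<bar>seg_mean (\<lambda>n. X n \<omega>) a b $ d - \<mu>\<bar>} \<le> 2 / real N ^ 4"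
proof -
  define D where "D = real CARD('d)"
  define t where "t = sqrt (fN / (2 * D * real (b - a)))"
  have "D > 0" by (simp add: D_def)
  then have t: "t > 0" "c0 * t^2 * real (b - a) = c0 * (fN / (2 * D))"
    unfolding t_def using f ab by (simp_all add: field_simps)
  have "measure M {\<omega> \<in> space M. t \<le> \<bar>seg_mean (\<lambda>n. X n \<omega>) a b $ d - \<mu>\<bar>}
      \<le> 2 * exp (- c0 * t^2 * real (b - a))"
    using subgauss[rule_format, of "b - a" t] t(1) ab
    by (intro measure_seg_mean_dev_le[OF P indep sub rv distr G ab]) simp
  also have "\<dots> \<le> 2 / real N ^ 4"
    using exp_neg_penalty_le[OF c0 _ C[folded D_def] f(2) N] t(2) by (simp add: D_def)
  finally show ?thesis by (simp add: t_def D_def)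
qed

lemma consecutive_detected_within_block_cover:
  fixes X :: "nat \<Rightarrow> 'a \<Rightarrow> real^'d" and G :: "(real^'d) measure"
  assumes P: "prob_space M"
    and rv: "\<forall>n\<in>{1..N}. X n \<in> borel_measurable M"
    and indep: "prob_space.indep_vars M (\<lambda>_. borel) X {1..N}"
    and block: "l < r" "r \<le> N" and distr: "\<forall>n\<in>{l + 1 .. r}. distr M borel (X n) = G"
    and G: "prob_space G" "sets G = sets borel"
    and c0: "c0 > 0"
    and subgauss: "\<forall>d. \<forall>n\<ge>1. \<forall>a>0.
               measure (PiM {..<n} (\<lambda>_. G))
                 {z \<in> space (PiM {..<n} (\<lambda>_. G)).
                    \<bar>(\<Sum>i<n. z i $ d) / real n - (\<integral>x. x $ d \<partial>G)\<bar> \<ge> a}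
               \<le> 2 * exp (- c0 * a^2 * real n)"
    and C: "C > 16 * real CARD('d) / c0"
    and f: "fN > 0" "fN \<ge> C * ln (real N)"
    and N: "Mmax < N"
  shows "\<exists>B\<in>sets M. measure M B \<le> 2 * real CARD('d) / real N ^ 2 \<and>
           {\<omega> \<in> space M. \<exists>n1 n2 n3. n1 < n2 \<and> n2 < n3 \<and> n3 \<le> r - l \<and>
              {l + n1 + 1 .. l + n2} \<in> detected_segments (\<lambda>n. X n \<omega>) N Mmax fN beta \<and>
              {l + n2 + 1 .. l + n3} \<in> detected_segments (\<lambda>n. X n \<omega>) N Mmax fN beta} \<subseteq> B"
proof -
  interpret prob_space M by (rule P)
  define D where "D = real CARD('d)"
  define \<mu> :: "real^'d" where "\<mu> = (\<chi> d. \<integral>x. x $ d \<partial>G)"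
  define I where "I = {(a, b, d :: 'd). l \<le> a \<and> a < b \<and> b \<le> r}"
  define E where "E = (\<lambda>(a, b, d :: 'd). {\<omega> \<in> space M.
      sqrt (fN / (2 * D * real (b - a))) \<le> \<bar>seg_mean (\<lambda>n. X n \<omega>) a b $ d - \<mu> $ d\<bar>})"
  have block_sub: "{a<..b} \<subseteq> {1..N}" "\<forall>n\<in>{a<..b}. distr M borel (X n) = G"
    if "(a, b, d) \<in> I" for a b d
    using that block distr by (auto simp: I_def)
  have E_sets: "E i \<in> sets M" if "i \<in> I" for i
  proof -
    obtain a b d where i: "i = (a, b, d)" by (cases i)
    have [measurable]: "(\<lambda>\<omega>. seg_mean (\<lambda>n. X n \<omega>) a b $ d) \<in> borel_measurable M"
      using borel_measurable_seg_mean_component rv block_sub(1) that i by blast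
    show ?thesis unfolding i E_def prod.case by measurable
  qed
  have E_prob: "measure M (E i) \<le> 2 / real N ^ 4" if "i \<in> I" for i
  proof -
    obtain a b d where i: "i = (a, b, d)" and ab: "a < b" using \<open>i \<in> I\<close> by (auto simp: I_def)
    show ?thesis
      unfolding i E_def prod.case D_def \<mu>_def vec_lambda_beta
      using block_sub[OF that[unfolded i]] rv subgauss N
      by (intro measure_seg_mean_dev_penalty_le[OF P indep _ _ _ G ab c0 _ C f]) auto
  qed
  have I_sub: "I \<subseteq> {l..<r} \<times> {l<..r} \<times> UNIV" by (auto simp: I_def)
  then have finite_I: "finite I" by (rule finite_subset) simp
  have "card I \<le> (r - l) * ((r - l) * CARD('d))"
    using card_mono[OF _ I_sub] by (simp add: card_cartesian_product)
  also have "\<dots> \<le> N * (N * CARD('d))" using block by (intro mult_le_mono) auto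
  finally have card_I: "card I \<le> N * N * CARD('d)" by simp
  define B where "B = (\<Union>i\<in>I. E i)"
  have "measure M B \<le> real (card I) * (2 / real N ^ 4)"
    unfolding B_def using E_sets E_prob by (intro measure_UN_le_card_mult finite_I) auto
  also have "\<dots> \<le> real (N * N * CARD('d)) * (2 / real N ^ 4)"
    using card_I by (intro mult_right_mono) (simp_all only: of_nat_le_iff, simp)
  also have "\<dots> = 2 * D / real N ^ 2"
    using N by (simp add: D_def power2_eq_square power4_eq_xxxx)
  finally have "measure M B \<le> 2 * D / real N ^ 2" .
  moreover have "B \<in> sets M" unfolding B_def using finite_I E_sets by blast
  moreover have "{\<omega> \<in> space M. \<exists>n1 n2 n3. n1 < n2 \<and> n2 < n3 \<and> n3 \<le> r - l \<and>
              {l + n1 + 1 .. l + n2} \<in> detected_segments (\<lambda>n. X n \<omega>) N Mmax fN beta \<and>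
              {l + n2 + 1 .. l + n3} \<in> detected_segments (\<lambda>n. X n \<omega>) N Mmax fN beta} \<subseteq> B"
  proof safe
    fix \<omega> n1 n2 n3
    assume \<omega>: "\<omega> \<in> space M" and n: "n1 < n2" "n2 < n3" "n3 \<le> r - l"
      and s1: "{l + n1 + 1 .. l + n2} \<in> detected_segments (\<lambda>n. X n \<omega>) N Mmax fN beta"
      and s2: "{l + n2 + 1 .. l + n3} \<in> detected_segments (\<lambda>n. X n \<omega>) N Mmax fN beta"
    have "l + n1 < l + n2" "l + n2 < l + n3" using n by simp_all
    from consecutive_detected_imp_mean_dev[OF N s1 this(1) s2 this(2), of \<mu>]
    obtain p q d where "(p = l + n1 \<and> q = l + n2) \<or> (p = l + n2 \<and> q = l + n3)" "p < q"
      and "sqrt (fN / (2 * D * real (q - p))) \<le> \<bar>seg_mean (\<lambda>n. X n \<omega>) p q $ d - \<mu> $ d\<bar>"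
      unfolding D_def by blast
    then have "(p, q, d) \<in> I" "\<omega> \<in> E (p, q, d)" using \<omega> n block by (auto simp: I_def E_def)
    then show "\<omega> \<in> B" unfolding B_def by blast
  qed
  ultimately show ?thesis unfolding D_def by blast
qed

theorem lemma4:
  fixes M :: "'a measure"
    and X :: "nat \<Rightarrow> nat \<Rightarrow> 'a \<Rightarrow> real^'d"
    and M0 :: nat
    and L :: "nat \<Rightarrow> nat \<Rightarrow> nat"
    and G :: "nat \<Rightarrow> (real^'d) measure"
    and c0 C :: real
    and Mmax :: nat
    and f :: "nat \<Rightarrow> real"
    and beta :: "nat \<Rightarrow> nat"
    and k :: nat
  assumes P: "prob_space M"
    and rv: "\<forall>\<^sub>F N in sequentially. \<forall>n\<in>{1..N}. X N n \<in> borel_measurable M"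
    and indep: "\<forall>\<^sub>F N in sequentially. prob_space.indep_vars M (\<lambda>_. borel) (X N) {1..N}"
    and L0: "\<forall>\<^sub>F N in sequentially. L N 0 = 0"
    and Lend: "\<forall>\<^sub>F N in sequentially. L N (M0 + 1) = N"
    and Lmono: "\<forall>\<^sub>F N in sequentially. \<forall>j\<le>M0. L N j < L N (Suc j)"
    and Nk_inf: "\<forall>j\<in>{1..M0+1}. filterlim (\<lambda>N. L N j - L N (j - 1)) at_top sequentially"
    and distr: "\<forall>\<^sub>F N in sequentially. \<forall>j\<in>{1..M0+1}. \<forall>n\<in>{L N (j - 1) + 1 .. L N j}.
                  distr M borel (X N n) = G j"
    and Gprob: "\<forall>j\<in>{1..M0+1}. prob_space (G j)"
    and Gsets: "\<forall>j\<in>{1..M0+1}. sets (G j) = sets borel"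
    and mean: "\<forall>j\<in>{1..M0+1}. integrable (G j) (\<lambda>x. x)"
    and cov: "\<forall>j\<in>{1..M0+1}. integrable (G j) (\<lambda>x. (norm x)^2)"
    and mean_change: "\<forall>j\<in>{1..M0}. (\<integral>x. x \<partial>G j) \<noteq> (\<integral>x. x \<partial>G (Suc j))"
    and c0: "c0 > 0"
    and A4: "\<forall>j\<in>{1..M0+1}. \<forall>d. \<forall>n\<ge>1. \<forall>a>0.
               measure (PiM {..<n} (\<lambda>_. G j))
                 {z \<in> space (PiM {..<n} (\<lambda>_. G j)).
                    \<bar>(\<Sum>i<n. z i $ d) / real n - (\<integral>x. x $ d \<partial>G j)\<bar> \<ge> a}
               \<le> 2 * exp (- c0 * a^2 * real n)"
    and Mmax: "Mmax \<ge> 1"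
    and fpos: "\<forall>N. f N > 0"
    and C: "C > 16 * real CARD('d) / c0"
    and fC: "\<forall>N. f N \<ge> C * ln (real N)"
    and k: "k \<in> {1..M0+1}"
  shows "AE \<omega> in M. \<not> (\<exists>\<^sub>F N in sequentially.
           (\<exists>n1 n2 n3. n1 < n2 \<and> n2 < n3 \<and> n3 \<le> L N k - L N (k - 1) \<and>
              {L N (k - 1) + n1 + 1 .. L N (k - 1) + n2}
                \<in> detected_segments (\<lambda>n. X N n \<omega>) N Mmax (f N) (beta N) \<and>
              {L N (k - 1) + n2 + 1 .. L N (k - 1) + n3}
                \<in> detected_segments (\<lambda>n. X N n \<omega>) N Mmax (f N) (beta N)))"
proof (rule AE_not_frequently_if_summable_cover[OF P, of "\<lambda>N. 2 * real CARD('d) / real N ^ 2"],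
    goal_cases summable cover)
  \<comment> \<open>Only the i.i.d. structure of segment k, (A.4) and the growth of the penalty are used.\<close>
  case summable
  show ?case
    using summable_mult[OF inverse_power_summable[of 2], of "2 * real CARD('d)"]
    by (simp add: divide_inverse)
next
  case cover
  have block: "L N (k - 1) < L N k \<and> L N k \<le> N"
    if mono: "\<forall>j\<le>M0. L N j < L N (Suc j)" and last: "L N (M0 + 1) = N" for N
  proof
    show "L N (k - 1) < L N k" using mono[rule_format, of "k - 1"] k by auto
    have "L N k \<le> L N (M0 + 1)"
      by (rule lift_Suc_mono_le_ivl[of "{..M0}"]) (use mono k in \<open>auto simp: less_imp_le\<close>)
    then show "L N k \<le> N" using last by simp
  qed
  from rv indep Lend Lmono distr eventually_gt_at_top[of Mmax] show ?case
  proof eventually_elim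
    case (elim N)
    then have "L N (k - 1) < L N k" "L N k \<le> N" using block by auto
    moreover have "\<forall>n\<in>{L N (k - 1) + 1 .. L N k}. distr M borel (X N n) = G k"
      using elim(5) k by blast
    ultimately show ?case
      using elim(1,2,6) Gprob Gsets A4 k fpos fC
      by (intro consecutive_detected_within_block_cover[OF P _ _ _ _ _ _ _ c0 _ C, where G = "G k"]) auto
  qed
qed

end
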